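(* Let $n\ge 4$, $N=\{1,\dots,n\}$, fix distinct $i_1,i_2\in N$ and let $\hat N^c=N\setminus\{i_1,i_2\}$. Then the inequality $$\sum_{j\in\hat N^c}\left(x_{i_1j}+x_{ji_1}+x_{i_2j}\right)-x_{i_2i_1}-\sum_{j,j'\in\hat N^c:\,j\ne j'} x_{jj'}\le 3-\frac{(n-4)(n-5)}{2}$$ is a valid inequality for the weak order polytope $P^n_{WO}$, i.e. it holds for every point $x\in P^n_{WO}$.
   Context: Let $N=\{1,\dots,n\}$ and $A_N=\{(i,j): i,j\in N, i\ne j\}$. A weak order on $N$ is a binary relation $W\subseteq N\times N$ that is reflexive, transitive and total; $(i,j)\in W$ is read "$i$ is preferred over or tied with $j$". The characteristic vector of $W$ is $x^W\in\{0,1\}^{A_N}$ with $x^W_{(i,j)}=1$ if $(i,j)\in W$ and $0$ otherwise. The weak order polytope $P^n_{WO}$ is the convex hull of the characteristic vectors of all weak orders on $N$; its points are vectors $x\in\mathbb{R}^{A_N}$ and $x_{ij}$ denotes the coordinate $x_{(i,j)}$. *)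

theory Defs
  imports "HOL-Analysis.Analysis"
begin

text \<open>Ground set N is the finite type 'n (so n = CARD('n)). Points live in
  real^('n \<times> 'n); only the off-diagonal coordinates (the arcs A_N) are meaningful,
  the diagonal coordinates are identically 0 on the polytope.\<close>

definition weak_order :: "('n \<times> 'n) set \<Rightarrow> bool" where
  "weak_order W \<longleftrightarrow> refl W \<and> trans W \<and> total W"

definition char_vec :: "('n::finite \<times> 'n) set \<Rightarrow> real ^ ('n \<times> 'n)" where
  "char_vec W = (\<chi> a. if fst a \<noteq> snd a \<and> a \<in> W then 1 else 0)"

definition weak_order_polytope :: "(real ^ ('n::finite \<times> 'n)) set" where
  "weak_order_polytope = convex hull {char_vec W | W. weak_order W}"

end

theory Submission
  imports Defs
begin

(* The left-hand side is linear in x, so it suffices to check the vertices char_vec W.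
   Let C = N - {i1, i2}, m = |C|, and let T be the set of elements of C tied with i1.
   Totality makes the arcs between i1 and C contribute m + |T|, and makes each unordered
   pair in C contribute at least 1 to the subtracted sum, pairs inside T contributing 2.
   If T is nonempty, transitivity gives x_(i2,t) <= x_(i2,i1) for t in T, so the i2-row
   minus x_(i2,i1) is at most m - 1.  Since |T| - [T nonempty] <= |T|(|T|-1)/2, the value is
   at most 2m - m(m-1)/2, which is the right-hand side. *)

definition off_diag :: "'a set \<Rightarrow> ('a \<times> 'a) set" where
  "off_diag A = {(j, j'). j \<in> A \<and> j' \<in> A \<and> j \<noteq> j'}"

lemma card_off_diag:
  assumes "finite A"
  shows "real (card (off_diag A)) = real (card A) * (real (card A) - 1)"
proof -
  have "off_diag A = A \<times> A - (\<lambda>a. (a, a)) ` A"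
    by (auto simp: off_diag_def)
  moreover have "card ((\<lambda>a. (a, a)) ` A) = card A"
    by (rule card_image) (auto simp: inj_on_def)
  moreover have "card (A \<times> A - (\<lambda>a. (a, a)) ` A) = card (A \<times> A) - card ((\<lambda>a. (a, a)) ` A)"
    using assms by (intro card_Diff_subset) auto
  ultimately have "card (off_diag A) = card A * card A - card A"
    by (simp add: card_cartesian_product)
  then show ?thesis
    by (simp add: of_nat_diff algebra_simps)
qed

lemma linear_le_on_convex_hull:
  fixes f :: "'a::real_vector \<Rightarrow> real"
  assumes "linear f" and "\<And>s. s \<in> S \<Longrightarrow> f s \<le> b" and "x \<in> convex hull S"
  shows "f x \<le> b"
proof -
  have "convex hull S \<subseteq> f -` {..b}"
    using assms(2) by (intro hull_minimal convex_linear_vimage[OF assms(1)]) auto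
  then show ?thesis
    using assms(3) by auto
qed

lemma double_le_of_bool_plus_pairs:
  "2 * real a \<le> 2 * of_bool (a \<noteq> 0) + real a * (real a - 1)"
proof (cases "a \<le> 1")
  case True
  then show ?thesis
    by (cases a) auto
next
  case False
  then have "0 \<le> (real a - 1) * (real a - 2)"
    by auto
  with False show ?thesis
    by (simp add: algebra_simps)
qed

lemma char_vec_nth: "char_vec W $ (p, q) = of_bool (p \<noteq> q \<and> (p, q) \<in> W)"
  by (simp add: char_vec_def)

lemma sum_char_vec_in_out:
  fixes W :: "('n::finite \<times> 'n) set"
  assumes "total W" and "i \<notin> C"
  shows "(\<Sum>j\<in>C. char_vec W $ (i, j) + char_vec W $ (j, i))
           = real (card C) + real (card {j\<in>C. (i, j) \<in> W \<and> (j, i) \<in> W})"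
proof -
  have "(\<Sum>j\<in>C. char_vec W $ (i, j) + char_vec W $ (j, i))
          = (\<Sum>j\<in>C. 1 + of_bool ((i, j) \<in> W \<and> (j, i) \<in> W))"
  proof (rule sum.cong)
    fix j assume "j \<in> C"
    with assms(2) have "i \<noteq> j"
      by auto
    with assms(1) have "(i, j) \<in> W \<or> (j, i) \<in> W"
      by (simp add: total_on_def)
    with \<open>i \<noteq> j\<close> show "char_vec W $ (i, j) + char_vec W $ (j, i)
        = 1 + of_bool ((i, j) \<in> W \<and> (j, i) \<in> W)"
      by (auto simp: char_vec_nth)
  qed simp
  also have "\<dots> = real (card C) + real (card {j\<in>C. (i, j) \<in> W \<and> (j, i) \<in> W})"
    by (simp add: sum.distrib Int_def)
  finally show ?thesis .
qed

lemma sum_char_vec_off_diag_ge: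
  fixes W :: "('n::finite \<times> 'n) set"
  assumes "total W" and "T \<subseteq> C"
    and tied: "\<And>j j'. j \<in> T \<Longrightarrow> j' \<in> T \<Longrightarrow> (j, j') \<in> W"
  shows "real (card (off_diag C)) + real (card (off_diag T))
           \<le> 2 * (\<Sum>(j, j')\<in>off_diag C. char_vec W $ (j, j'))"
proof -
  have "(\<Sum>(j, j')\<in>off_diag C. char_vec W $ (j', j)) = (\<Sum>(j, j')\<in>off_diag C. char_vec W $ (j, j'))"
    by (rule sum.reindex_bij_witness[where i=prod.swap and j=prod.swap]) (auto simp: off_diag_def)
  then have "2 * (\<Sum>(j, j')\<in>off_diag C. char_vec W $ (j, j'))
               = (\<Sum>(j, j')\<in>off_diag C. char_vec W $ (j, j') + char_vec W $ (j', j))"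
    by (simp add: sum.distrib case_prod_beta)
  also have "\<dots> \<ge> (\<Sum>p\<in>off_diag C. 1 + of_bool (p \<in> off_diag T))"
  proof (rule sum_mono, clarify)
    fix j j' assume "(j, j') \<in> off_diag C"
    then have "j \<noteq> j'"
      by (simp add: off_diag_def)
    with assms(1) have "(j, j') \<in> W \<or> (j', j) \<in> W"
      by (simp add: total_on_def)
    with \<open>j \<noteq> j'\<close> tied show "1 + of_bool ((j, j') \<in> off_diag T)
        \<le> char_vec W $ (j, j') + char_vec W $ (j', j)"
      by (auto simp: char_vec_nth off_diag_def)
  qed
  also have "(\<Sum>p\<in>off_diag C. 1 + of_bool (p \<in> off_diag T))
               = real (card (off_diag C)) + real (card (off_diag T))"
  proof -
    have "off_diag T \<subseteq> off_diag C"
      using assms(2) by (auto simp: off_diag_def)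
    then show ?thesis
      by (simp add: sum.distrib Int_absorb1)
  qed
  finally show ?thesis .
qed

lemma sum_char_vec_row_le:
  fixes W :: "('n::finite \<times> 'n) set"
  assumes "trans W" and "i1 \<noteq> i2" and "T \<subseteq> C" and "\<And>t. t \<in> T \<Longrightarrow> (t, i1) \<in> W"
  shows "(\<Sum>j\<in>C. char_vec W $ (i2, j)) - char_vec W $ (i2, i1) \<le> real (card C) - of_bool (T \<noteq> {})"
proof -
  have row_le_card: "(\<Sum>j\<in>A. char_vec W $ (i2, j)) \<le> real (card A)" for A
    using sum_bounded_above[of A "\<lambda>j. char_vec W $ (i2, j)" 1] by (simp add: char_vec_nth)
  show ?thesis
  proof (cases "T = {}")
    case False
    then obtain t where "t \<in> T"
      by blast
    with assms(3) have "t \<in> C"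
      by blast
    have "char_vec W $ (i2, t) \<le> char_vec W $ (i2, i1)"
      using assms(1,2,4) \<open>t \<in> T\<close> by (auto simp: char_vec_nth dest: transD)
    moreover have "(\<Sum>j\<in>C. char_vec W $ (i2, j))
                     = char_vec W $ (i2, t) + (\<Sum>j\<in>C - {t}. char_vec W $ (i2, j))"
      by (rule sum.remove[OF finite \<open>t \<in> C\<close>])
    moreover have "real (card (C - {t})) = real (card C) - 1"
      using card.remove[OF finite \<open>t \<in> C\<close>] by simp
    ultimately show ?thesis
      using False row_le_card[of "C - {t}"] by simp
  next
    case True
    then show ?thesis
      using row_le_card[of C] by (simp add: char_vec_nth)
  qed
qed

definition ineq_lhs :: "'n::finite \<Rightarrow> 'n \<Rightarrow> real ^ ('n \<times> 'n) \<Rightarrow> real" where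
  "ineq_lhs i1 i2 x =
     (\<Sum>j \<in> UNIV - {i1, i2}. x $ (i1, j) + x $ (j, i1) + x $ (i2, j))
     - x $ (i2, i1)
     - (\<Sum>(j, j') \<in> {(j, j'). j \<in> UNIV - {i1, i2} \<and> j' \<in> UNIV - {i1, i2} \<and> j \<noteq> j'}. x $ (j, j'))"

lemma linear_ineq_lhs: "linear (ineq_lhs i1 i2)"
proof -
  have "bounded_linear (ineq_lhs i1 i2)"
    unfolding ineq_lhs_def case_prod_beta prod.collapse
    by (intro bounded_linear_sub bounded_linear_sum bounded_linear_add bounded_linear_vec_nth)
  then show ?thesis
    by (rule bounded_linear.linear)
qed

lemma ineq_lhs_char_vec_le:
  fixes W :: "('n::finite \<times> 'n) set"
  assumes "weak_order W" and "i1 \<noteq> i2"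
  shows "ineq_lhs i1 i2 (char_vec W) \<le> 3 - (real CARD('n) - 4) * (real CARD('n) - 5) / 2"
proof -
  define C where "C = UNIV - {i1, i2}"
  define T where "T = {j\<in>C. (i1, j) \<in> W \<and> (j, i1) \<in> W}"
  have "total W" and "trans W"
    using assms(1) by (simp_all add: weak_order_def)
  have "T \<subseteq> C"
    by (auto simp: T_def)
  have "card {i1, i2} \<le> CARD('n)"
    by (rule card_mono) simp_all
  then have card_C: "real (card C) = real CARD('n) - 2"
    using assms(2) by (simp add: C_def card_Diff_subset of_nat_diff)
  have in_out: "(\<Sum>j\<in>C. char_vec W $ (i1, j) + char_vec W $ (j, i1)) = real (card C) + real (card T)"
    unfolding T_def using \<open>total W\<close> by (rule sum_char_vec_in_out) (simp add: C_def)
  have row: "(\<Sum>j\<in>C. char_vec W $ (i2, j)) - char_vec W $ (i2, i1) \<le> real (card C) - of_bool (T \<noteq> {})"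
    using \<open>trans W\<close> assms(2) \<open>T \<subseteq> C\<close> by (rule sum_char_vec_row_le) (simp add: T_def)
  have "\<And>j j'. j \<in> T \<Longrightarrow> j' \<in> T \<Longrightarrow> (j, j') \<in> W"
    using \<open>trans W\<close> by (auto simp: T_def dest: transD)
  with \<open>total W\<close> \<open>T \<subseteq> C\<close> have pairs: "real (card (off_diag C)) + real (card (off_diag T))
      \<le> 2 * (\<Sum>(j, j')\<in>off_diag C. char_vec W $ (j, j'))"
    by (rule sum_char_vec_off_diag_ge)
  have "2 * real (card T) \<le> 2 * of_bool (T \<noteq> {}) + real (card (off_diag T))"
    using double_le_of_bool_plus_pairs[of "card T"] by (simp add: card_off_diag)
  moreover have "ineq_lhs i1 i2 (char_vec W)
      = (\<Sum>j\<in>C. char_vec W $ (i1, j) + char_vec W $ (j, i1)) + (\<Sum>j\<in>C. char_vec W $ (i2, j))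
        - char_vec W $ (i2, i1) - (\<Sum>(j, j')\<in>off_diag C. char_vec W $ (j, j'))"
    by (simp add: ineq_lhs_def C_def off_diag_def sum.distrib)
  ultimately have "ineq_lhs i1 i2 (char_vec W) \<le> 2 * real (card C) - real (card (off_diag C)) / 2"
    using in_out row pairs by linarith
  also have "\<dots> = 3 - (real CARD('n) - 4) * (real CARD('n) - 5) / 2"
    unfolding card_off_diag[OF finite] card_C by (simp add: field_simps)
  finally show ?thesis .
qed

theorem mainTheorem5:
  fixes i1 i2 :: "'n::finite" and x :: "real ^ ('n \<times> 'n)"
  assumes "CARD('n) \<ge> 4"
    and "i1 \<noteq> i2"
    and "x \<in> weak_order_polytope"
  shows "(\<Sum>j \<in> UNIV - {i1, i2}. x $ (i1, j) + x $ (j, i1) + x $ (i2, j))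
           - x $ (i2, i1)
           - (\<Sum>(j, j') \<in> {(j, j'). j \<in> UNIV - {i1, i2} \<and> j' \<in> UNIV - {i1, i2} \<and> j \<noteq> j'}. x $ (j, j'))
         \<le> 3 - (real CARD('n) - 4) * (real CARD('n) - 5) / 2"
proof -
  have "ineq_lhs i1 i2 x \<le> 3 - (real CARD('n) - 4) * (real CARD('n) - 5) / 2"
  proof (rule linear_le_on_convex_hull[OF linear_ineq_lhs])
    fix s assume "s \<in> {char_vec W | W :: ('n \<times> 'n) set. weak_order W}"
    then obtain W where "weak_order W" and "s = char_vec W"
      by blast
    then show "ineq_lhs i1 i2 s \<le> 3 - (real CARD('n) - 4) * (real CARD('n) - 5) / 2"
      using assms(2) by (simp add: ineq_lhs_char_vec_le)
  next
    show "x \<in> convex hull {char_vec W | W. weak_order W}"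
      using assms(3) by (simp add: weak_order_polytope_def)
  qed
  then show ?thesis
    by (simp add: ineq_lhs_def)
qed

end
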